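(* Let $S$ be a $\phi$-calibrated surrogate with potential $h:\mathcal{D}\to\mathbb{R}$ and calibration function $\zeta_h$. Suppose $h$ is $(1/\beta)$-strongly convex on $\mathcal{D}$ with respect to a norm $\|\cdot\|$ on $\mathcal{H}$, i.e. $h(u)\ge h(v)+\langle u-v,\nabla h(v)\rangle+\frac{1}{2\beta}\|u-v\|^2$ for all $u,v\in\mathcal{D}$. Then for all $\varepsilon\ge0$, $$\zeta_h(\varepsilon)\ge\frac{\varepsilon^2}{8\,c_{\psi,\|\cdot\|_*}^2\,\beta},\qquad c_{\psi,\|\cdot\|_*}=\max_{z\in\mathcal{Z}}\|\psi(z)\|_*,$$ where $\|\cdot\|_*$ is the dual norm of $\|\cdot\|$.
   Context: Let $\mathcal{Y},\mathcal{Z}$ be finite nonempty sets, $\mathcal{H}$ a finite-dimensional real Euclidean space, $\psi:\mathcal{Z}\to\mathcal{H}$, $\phi:\mathcal{Y}\to\mathcal{H}$, $c\in\mathbb{R}$, and $L(z,y)=\langle\psi(z),\phi(y)\rangle+c$. For $q\in\operatorname{Prob}(\mathcal{Y})$, $\mu(q)=\sum_y q(y)\phi(y)$; $\mathcal{M}=\operatorname{hull}(\phi(\mathcal{Y}))$. $\ell(z,q)=\mathbb{E}_{Y\sim q}L(z,Y)$, $\delta\ell(z,q)=\ell(z,q)-\min_{z'}\ell(z',q)$. $z(u)$ denotes an element of $\arg\min_{z}\langle\psi(z),u\rangle$ chosen by a fixed tie-breaking rule. For $S:\mathcal{V}\times\mathcal{Y}\to\mathbb{R}$, $s(v,q)=\mathbb{E}_{Y\sim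 q}S(v,Y)$, $\delta s(v,q)=s(v,q)-\inf_{v'}s(v',q)$. $D_h(u',u)=h(u')-h(u)-\langle u'-u,\nabla h(u)\rangle$. $S$ is $\phi$-calibrated with potential $h$ if there exist a convex $\mathcal{D}\supseteq\mathcal{M}$, strictly convex differentiable $h:\mathcal{D}\to\mathbb{R}$ and a continuous bijection $t:\mathcal{D}\to\mathcal{V}$ with $\delta s(v,q)=D_h(\mu(q),t^{-1}(v))$ for all $v,q$. Decoding $d(v)=z(t^{-1}(v))$. Calibration function $\zeta_h(\varepsilon)=\inf\{\delta s(v,q):\delta\ell(d(v),q)\ge\varepsilon\}$ ($\inf\emptyset=+\infty$). *)

theory Defs
  imports "HOL-Analysis.Analysis"
begin

definition Prob :: "('y::finite \<Rightarrow> real) set" where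
  "Prob = {q. (\<forall>y. 0 \<le> q y) \<and> (\<Sum>y\<in>UNIV. q y) = 1}"

definition mean_emb :: "('y::finite \<Rightarrow> 'h::real_vector) \<Rightarrow> ('y \<Rightarrow> real) \<Rightarrow> 'h" where
  "mean_emb \<phi> q = (\<Sum>y\<in>UNIV. q y *\<^sub>R \<phi> y)"

definition lossL :: "('z \<Rightarrow> 'h::real_inner) \<Rightarrow> ('y \<Rightarrow> 'h) \<Rightarrow> real \<Rightarrow> 'z \<Rightarrow> 'y \<Rightarrow> real" where
  "lossL \<psi> \<phi> c z y = inner (\<psi> z) (\<phi> y) + c"

definition exp_loss :: "('z \<Rightarrow> 'h::real_inner) \<Rightarrow> ('y::finite \<Rightarrow> 'h) \<Rightarrow> real \<Rightarrow> 'z \<Rightarrow> ('y \<Rightarrow> real) \<Rightarrow> real" where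
  "exp_loss \<psi> \<phi> c z q = (\<Sum>y\<in>UNIV. q y * lossL \<psi> \<phi> c z y)"

definition regret_loss :: "('z::finite \<Rightarrow> 'h::real_inner) \<Rightarrow> ('y::finite \<Rightarrow> 'h) \<Rightarrow> real \<Rightarrow> 'z \<Rightarrow> ('y \<Rightarrow> real) \<Rightarrow> real" where
  "regret_loss \<psi> \<phi> c z q = exp_loss \<psi> \<phi> c z q - (MIN z'. exp_loss \<psi> \<phi> c z' q)"

definition is_argmin_selector :: "('z \<Rightarrow> 'h::real_inner) \<Rightarrow> ('h \<Rightarrow> 'z) \<Rightarrow> bool" where
  "is_argmin_selector \<psi> zsel \<longleftrightarrow> (\<forall>u z'. inner (\<psi> (zsel u)) u \<le> inner (\<psi> z') u)"

definition exp_surr :: "('v \<Rightarrow> 'y::finite \<Rightarrow> real) \<Rightarrow> 'v \<Rightarrow> ('y \<Rightarrow> real) \<Rightarrow> real" where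
  "exp_surr S v q = (\<Sum>y\<in>UNIV. q y * S v y)"

definition regret_surr :: "'v set \<Rightarrow> ('v \<Rightarrow> 'y::finite \<Rightarrow> real) \<Rightarrow> 'v \<Rightarrow> ('y \<Rightarrow> real) \<Rightarrow> real" where
  "regret_surr V S v q = exp_surr S v q - (INF v'\<in>V. exp_surr S v' q)"

definition bregman :: "('h::real_inner \<Rightarrow> real) \<Rightarrow> ('h \<Rightarrow> 'h) \<Rightarrow> 'h \<Rightarrow> 'h \<Rightarrow> real" where
  "bregman h gradh u' u = h u' - h u - inner (u' - u) (gradh u)"

definition strictly_convex_on :: "'a::real_vector set \<Rightarrow> ('a \<Rightarrow> real) \<Rightarrow> bool" where
  "strictly_convex_on A f \<longleftrightarrow> (\<forall>x\<in>A. \<forall>y\<in>A. \<forall>t. x \<noteq> y \<and> 0 < t \<and> t < 1 \<longrightarrow>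
      f ((1 - t) *\<^sub>R x + t *\<^sub>R y) < (1 - t) * f x + t * f y)"

definition phi_calibrated :: "('y::finite \<Rightarrow> 'h::euclidean_space) \<Rightarrow> 'v::topological_space set \<Rightarrow> ('v \<Rightarrow> 'y \<Rightarrow> real)
     \<Rightarrow> 'h set \<Rightarrow> ('h \<Rightarrow> real) \<Rightarrow> ('h \<Rightarrow> 'h) \<Rightarrow> ('h \<Rightarrow> 'v) \<Rightarrow> bool" where
  "phi_calibrated \<phi> V S D h gradh t \<longleftrightarrow>
     convex D \<and> convex hull (range \<phi>) \<subseteq> D \<and>
     strictly_convex_on D h \<and>
     (\<forall>u\<in>D. (h has_derivative (\<lambda>x. inner (gradh u) x)) (at u within D)) \<and>
     continuous_on D t \<and> bij_betw t D V \<and>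
     (\<forall>v\<in>V. \<forall>q\<in>Prob. regret_surr V S v q = bregman h gradh (mean_emb \<phi> q) (inv_into D t v))"

definition decode :: "('h \<Rightarrow> 'z) \<Rightarrow> 'h set \<Rightarrow> ('h \<Rightarrow> 'v) \<Rightarrow> 'v \<Rightarrow> 'z" where
  "decode zsel D t v = zsel (inv_into D t v)"

(* calibration function, with Inf {} = +infinity *)
definition calib_fun :: "('z::finite \<Rightarrow> 'h::real_inner) \<Rightarrow> ('y::finite \<Rightarrow> 'h) \<Rightarrow> real \<Rightarrow> ('h \<Rightarrow> 'z)
     \<Rightarrow> 'v set \<Rightarrow> ('v \<Rightarrow> 'y \<Rightarrow> real) \<Rightarrow> 'h set \<Rightarrow> ('h \<Rightarrow> 'v) \<Rightarrow> real \<Rightarrow> ereal" where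
  "calib_fun \<psi> \<phi> c zsel V S D t \<epsilon> =
     Inf {ereal (regret_surr V S v q) | v q. v \<in> V \<and> q \<in> Prob \<and>
            regret_loss \<psi> \<phi> c (decode zsel D t v) q \<ge> \<epsilon>}"

definition is_norm :: "('a::real_vector \<Rightarrow> real) \<Rightarrow> bool" where
  "is_norm N \<longleftrightarrow> (\<forall>x y. N (x + y) \<le> N x + N y) \<and> (\<forall>a x. N (a *\<^sub>R x) = \<bar>a\<bar> * N x)
                  \<and> (\<forall>x. N x = 0 \<longleftrightarrow> x = 0)"

definition dual_norm :: "('a::real_inner \<Rightarrow> real) \<Rightarrow> 'a \<Rightarrow> real" where
  "dual_norm N w = (SUP x\<in>{x. N x \<le> 1}. inner w x)"

end

theory Submission
  imports Defs
begin

text \<open>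
  Write \<open>\<mu> = \<mu>(q)\<close> and \<open>u = t\<^sup>-\<^sup>1(v)\<close>, and let \<open>C\<close> bound the dual norms of the \<open>\<psi> z\<close>.
  Since the expected loss is affine in \<open>\<mu>\<close> and the decoded prediction \<open>z(u)\<close> minimises
  \<open>\<langle>\<psi> z, u\<rangle>\<close>, the loss regret at \<open>q\<close> is at most \<open>\<langle>\<psi>(z(u)) - \<psi> z', \<mu> - u\<rangle> \<le> 2 C \<parallel>\<mu> - u\<parallel>\<close>,
  where \<open>z'\<close> minimises \<open>\<langle>\<psi> z', \<mu>\<rangle>\<close>.
  Strong convexity bounds the surrogate regret \<open>D\<^sub>h(\<mu>, u)\<close> from below by \<open>\<parallel>\<mu> - u\<parallel>\<^sup>2 / (2\<beta>)\<close>.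
  Hence a loss regret of at least \<open>\<epsilon>\<close> forces a surrogate regret of at least \<open>\<epsilon>\<^sup>2 / (8 C\<^sup>2 \<beta>)\<close>.
\<close>

lemma is_norm_zero: "is_norm N \<Longrightarrow> N 0 = 0"
  unfolding is_norm_def by auto

lemma is_norm_minus: "is_norm N \<Longrightarrow> N (- x) = N x"
  unfolding is_norm_def by (metis abs_minus_cancel abs_one mult_1 scaleR_minus1_left)

lemma is_norm_triangle: "is_norm N \<Longrightarrow> N (x + y) \<le> N x + N y"
  unfolding is_norm_def by blast

lemma is_norm_scaleR: "is_norm N \<Longrightarrow> N (a *\<^sub>R x) = \<bar>a\<bar> * N x"
  unfolding is_norm_def by blast

lemma is_norm_eq_zero_iff: "is_norm N \<Longrightarrow> N x = 0 \<longleftrightarrow> x = 0"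
  unfolding is_norm_def by blast

lemma is_norm_nonneg:
  assumes "is_norm N"
  shows "0 \<le> N x"
proof -
  have "0 = N (x + - x)" using is_norm_zero[OF assms] by simp
  also have "\<dots> \<le> N x + N (- x)" by (rule is_norm_triangle[OF assms])
  finally show ?thesis using is_norm_minus[OF assms] by simp
qed

lemma is_norm_pos: "is_norm N \<Longrightarrow> x \<noteq> 0 \<Longrightarrow> 0 < N x"
  using is_norm_nonneg is_norm_eq_zero_iff by (metis order_le_less)

lemma is_norm_sum: "is_norm N \<Longrightarrow> N (sum f A) \<le> (\<Sum>i\<in>A. N (f i))"
proof (induction A rule: infinite_finite_induct)
  case (insert x F)
  then show ?case using is_norm_triangle[OF insert.prems, of "f x" "sum f F"] by simp
qed (simp_all add: is_norm_zero)

lemma is_norm_le_norm: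
  fixes N :: "'a::euclidean_space \<Rightarrow> real"
  assumes "is_norm N"
  shows "N x \<le> (\<Sum>i\<in>Basis. N i) * norm x"
proof -
  have "N x = N (\<Sum>i\<in>Basis. (x \<bullet> i) *\<^sub>R i)" by (simp add: euclidean_representation)
  also have "\<dots> \<le> (\<Sum>i\<in>Basis. N ((x \<bullet> i) *\<^sub>R i))" by (rule is_norm_sum[OF assms])
  also have "\<dots> = (\<Sum>i\<in>Basis. \<bar>x \<bullet> i\<bar> * N i)" by (simp add: is_norm_scaleR[OF assms])
  also have "\<dots> \<le> (\<Sum>i\<in>Basis. norm x * N i)"
    by (rule sum_mono) (simp add: Basis_le_norm is_norm_nonneg[OF assms] mult_right_mono)
  finally show ?thesis by (simp add: sum_distrib_left mult.commute)
qed

lemma is_norm_continuous_on: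
  fixes N :: "'a::euclidean_space \<Rightarrow> real"
  assumes "is_norm N"
  shows "continuous_on A N"
proof (rule lipschitz_on_continuous_on[OF lipschitz_onI])
  let ?M = "\<Sum>i\<in>Basis. N i"
  show "0 \<le> ?M" by (simp add: sum_nonneg is_norm_nonneg[OF assms])
  have "N x - N y \<le> ?M * dist x y" for x y :: 'a
    using is_norm_triangle[OF assms, of "x - y" y] is_norm_le_norm[OF assms, of "x - y"]
    by (simp add: dist_norm)
  then show "dist (N x) (N y) \<le> ?M * dist x y" for x y
    by (metis abs_le_iff dist_commute dist_real_def minus_diff_eq)
qed

lemma is_norm_ge_norm:
  fixes N :: "'a::euclidean_space \<Rightarrow> real"
  assumes "is_norm N"
  obtains m where "0 < m" "\<And>x. m * norm x \<le> N x"
proof -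
  have "sphere (0::'a) 1 \<noteq> {}"
    using nonempty_Basis by (auto simp: norm_Basis)
  then obtain x0 :: 'a where "x0 \<in> sphere 0 1" "\<forall>y\<in>sphere 0 1. N x0 \<le> N y"
    using continuous_attains_inf[OF compact_sphere _ is_norm_continuous_on[OF assms]] by blast
  then have x0: "norm x0 = 1" and min: "\<And>y. norm y = 1 \<Longrightarrow> N x0 \<le> N y" by auto
  have "N x0 * norm x \<le> N x" for x
  proof (cases "x = 0")
    case False
    have "N x0 \<le> N (inverse (norm x) *\<^sub>R x)" using False by (intro min) simp
    also have "\<dots> = N x / norm x" using False by (simp add: is_norm_scaleR[OF assms] field_simps)
    finally show ?thesis using False by (simp add: field_simps)
  qed (simp add: is_norm_zero[OF assms])
  moreover have "0 < N x0" using x0 by (intro is_norm_pos[OF assms]) auto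
  ultimately show ?thesis using that by blast
qed

text \<open>Equivalence with the Euclidean norm makes the \<open>SUP\<close> in \<open>dual_norm\<close> a genuine supremum
  rather than the junk value of an unbounded set.\<close>

lemma bdd_above_inner_unit_ball:
  fixes N :: "'a::euclidean_space \<Rightarrow> real"
  assumes "is_norm N"
  shows "bdd_above ((\<lambda>x. inner w x) ` {x. N x \<le> 1})"
proof -
  obtain m where m: "0 < m" "\<And>x. m * norm x \<le> N x" using is_norm_ge_norm[OF assms] by blast
  have "inner w x \<le> norm w / m" if "N x \<le> 1" for x
  proof -
    have "norm x \<le> 1 / m" using m that by (smt (verit) pos_le_divide_eq mult.commute)
    then have "norm w * norm x \<le> norm w * (1 / m)" by (rule mult_left_mono) simp
    then show ?thesis using norm_cauchy_schwarz[of w x] by simp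
  qed
  then show ?thesis by (intro bdd_aboveI2) auto
qed

lemma inner_le_dual_norm_unit:
  fixes N :: "'a::euclidean_space \<Rightarrow> real"
  assumes "is_norm N" "N x \<le> 1"
  shows "inner w x \<le> dual_norm N w"
  unfolding dual_norm_def using assms by (intro cSUP_upper bdd_above_inner_unit_ball) auto

lemma dual_norm_nonneg:
  fixes N :: "'a::euclidean_space \<Rightarrow> real"
  shows "is_norm N \<Longrightarrow> 0 \<le> dual_norm N w"
  using inner_le_dual_norm_unit[of N 0 w] by (simp add: is_norm_zero)

lemma inner_le_dual_norm:
  fixes N :: "'a::euclidean_space \<Rightarrow> real"
  assumes "is_norm N"
  shows "inner w x \<le> dual_norm N w * N x"
proof (cases "x = 0")
  case False
  then have pos: "0 < N x" by (rule is_norm_pos[OF assms])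
  have "inner w (inverse (N x) *\<^sub>R x) \<le> dual_norm N w"
    using pos by (intro inner_le_dual_norm_unit[OF assms]) (simp add: is_norm_scaleR[OF assms])
  then show ?thesis using pos by (simp add: field_simps)
qed (simp add: is_norm_zero[OF assms])

lemma mean_emb_in_convex_hull: "q \<in> Prob \<Longrightarrow> mean_emb \<phi> q \<in> convex hull (range \<phi>)"
  unfolding Prob_def mean_emb_def by (intro convex_sum) (auto simp: hull_inc)

lemma exp_loss_eq_inner_mean_emb:
  assumes "q \<in> Prob"
  shows "exp_loss \<psi> \<phi> c z q = inner (\<psi> z) (mean_emb \<phi> q) + c"
proof -
  have "(\<Sum>y\<in>UNIV. q y) = 1" using assms unfolding Prob_def by simp
  then show ?thesis
    unfolding exp_loss_def lossL_def mean_emb_def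
    by (simp add: distrib_left sum.distrib inner_sum_right flip: sum_distrib_left sum_distrib_right)
qed

lemma regret_loss_selector_le:
  fixes \<psi> :: "'z::finite \<Rightarrow> 'h::euclidean_space"
  assumes "is_argmin_selector \<psi> zsel" "is_norm N" "q \<in> Prob"
  shows "regret_loss \<psi> \<phi> c (zsel u) q \<le> 2 * (MAX z. dual_norm N (\<psi> z)) * N (mean_emb \<phi> q - u)"
proof -
  define \<mu> where "\<mu> = mean_emb \<phi> q"
  define C where "C = (MAX z. dual_norm N (\<psi> z))"
  obtain z' where z': "(MIN z. exp_loss \<psi> \<phi> c z q) = exp_loss \<psi> \<phi> c z' q"
  proof -
    have "(MIN z. exp_loss \<psi> \<phi> c z q) \<in> range (\<lambda>z. exp_loss \<psi> \<phi> c z q)"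
      by (rule Min_in) auto
    then show ?thesis using that by blast
  qed
  have sel: "inner (\<psi> (zsel u)) u \<le> inner (\<psi> z') u"
    using assms(1) unfolding is_argmin_selector_def by blast
  have dual: "inner (\<psi> z) x \<le> C * N x" for z x
  proof -
    have "dual_norm N (\<psi> z) \<le> C" unfolding C_def by simp
    then show ?thesis
      using inner_le_dual_norm[OF assms(2)] is_norm_nonneg[OF assms(2)]
      by (meson mult_right_mono order_trans)
  qed
  have "regret_loss \<psi> \<phi> c (zsel u) q = inner (\<psi> (zsel u)) \<mu> - inner (\<psi> z') \<mu>"
    unfolding regret_loss_def z' by (simp add: exp_loss_eq_inner_mean_emb[OF assms(3)] \<mu>_def)
  also have "\<dots> \<le> inner (\<psi> (zsel u)) (\<mu> - u) + inner (\<psi> z') (u - \<mu>)"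
    using sel by (simp add: inner_diff_right)
  also have "\<dots> \<le> C * N (\<mu> - u) + C * N (u - \<mu>)"
    using dual by (intro add_mono)
  also have "N (u - \<mu>) = N (\<mu> - u)"
    using is_norm_minus[OF assms(2), of "\<mu> - u"] by simp
  finally show ?thesis unfolding C_def \<mu>_def by (simp add: mult_ac)
qed

lemma regret_surr_ge_strong_convexity:
  assumes "phi_calibrated \<phi> V S D h gradh t" "v \<in> V" "q \<in> Prob"
    and "\<forall>u\<in>D. \<forall>w\<in>D. h u \<ge> h w + inner (u - w) (gradh w) + (N (u - w))\<^sup>2 / (2 * \<beta>)"
  shows "(N (mean_emb \<phi> q - inv_into D t v))\<^sup>2 / (2 * \<beta>) \<le> regret_surr V S v q"
proof -
  have "inv_into D t v \<in> D" "mean_emb \<phi> q \<in> D"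
    using assms(1-3) mean_emb_in_convex_hull[OF assms(3)] unfolding phi_calibrated_def
    by (auto intro: inv_into_into simp: bij_betw_def)
  then show ?thesis
    using assms unfolding phi_calibrated_def bregman_def by force
qed

text \<open>
  For \<open>C = 0\<close> the left-hand side is \<open>\<epsilon>\<^sup>2 / 0 = 0\<close> in Isabelle, so the bound survives the
  degenerate case where every \<open>\<psi> z\<close> vanishes.
\<close>

lemma quadratic_bound_from_linear:
  fixes \<epsilon> C r \<beta> :: real
  assumes "0 \<le> \<epsilon>" "\<epsilon> \<le> 2 * C * r" "0 \<le> C" "0 \<le> r" "0 < \<beta>"
  shows "\<epsilon>\<^sup>2 / (8 * C\<^sup>2 * \<beta>) \<le> r\<^sup>2 / (2 * \<beta>)"
proof (cases "C = 0")
  case False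
  then have "\<epsilon>\<^sup>2 / (8 * C\<^sup>2 * \<beta>) \<le> (2 * C * r)\<^sup>2 / (8 * C\<^sup>2 * \<beta>)"
    using assms by (intro divide_right_mono power_mono) auto
  also have "\<dots> = r\<^sup>2 / (2 * \<beta>)" using False by (simp add: field_simps power2_eq_square)
  finally show ?thesis .
qed (use assms in simp)

theorem theorem4p3:
  fixes \<psi> :: "'z::finite \<Rightarrow> 'h::euclidean_space" and \<phi> :: "'y::finite \<Rightarrow> 'h" and c :: real
    and zsel :: "'h \<Rightarrow> 'z"
    and V :: "'v::topological_space set" and S :: "'v \<Rightarrow> 'y \<Rightarrow> real"
    and D :: "'h set" and h :: "'h \<Rightarrow> real" and gradh :: "'h \<Rightarrow> 'h" and t :: "'h \<Rightarrow> 'v"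
    and N :: "'h \<Rightarrow> real" and \<beta> :: real and \<epsilon> :: real
  assumes "is_argmin_selector \<psi> zsel"
    and "phi_calibrated \<phi> V S D h gradh t"
    and "is_norm N"
    and "\<beta> > 0"
    and "\<forall>u\<in>D. \<forall>w\<in>D. h u \<ge> h w + inner (u - w) (gradh w) + (N (u - w))\<^sup>2 / (2 * \<beta>)"
    and "\<epsilon> \<ge> 0"
  shows "calib_fun \<psi> \<phi> c zsel V S D t \<epsilon> \<ge>
           ereal (\<epsilon>\<^sup>2 / (8 * (MAX z. dual_norm N (\<psi> z))\<^sup>2 * \<beta>))"
proof -
  define C where "C = (MAX z. dual_norm N (\<psi> z))"
  have "0 \<le> C"
    unfolding C_def using dual_norm_nonneg[OF assms(3)] by (simp add: Max_ge_iff)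
  have "\<epsilon>\<^sup>2 / (8 * C\<^sup>2 * \<beta>) \<le> regret_surr V S v q"
    if "v \<in> V" "q \<in> Prob" "\<epsilon> \<le> regret_loss \<psi> \<phi> c (decode zsel D t v) q" for v q
  proof -
    let ?r = "N (mean_emb \<phi> q - inv_into D t v)"
    have "\<epsilon> \<le> 2 * C * ?r"
      using that(3) regret_loss_selector_le[OF assms(1,3) that(2), of \<phi> c "inv_into D t v"]
      unfolding decode_def C_def by linarith
    then have "\<epsilon>\<^sup>2 / (8 * C\<^sup>2 * \<beta>) \<le> ?r\<^sup>2 / (2 * \<beta>)"
      using \<open>0 \<le> C\<close> assms(4,6) is_norm_nonneg[OF assms(3)] by (intro quadratic_bound_from_linear)
    also have "\<dots> \<le> regret_surr V S v q"
      using regret_surr_ge_strong_convexity[OF assms(2) that(1,2) assms(5)] .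
    finally show ?thesis .
  qed
  then show ?thesis
    unfolding calib_fun_def C_def[symmetric] by (auto intro: Inf_greatest)
qed

end
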